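(* Let $\mathfrak L=(L_0,\dots,L_k)$ be a chain of Lagrangian submanifolds of a symplectic manifold $M$ with base point $y$, let $\vec p=(p_{0k},p_{k(k-1)},\dots,p_{10})$ with $p_{(i+1)i}\in L_i\cap L_{i+1}$ (indices mod $k+1$), and let $B\in\pi_2(\mathfrak L;\vec p)$. Then there exist anchors $\gamma_i$ of $L_i$, $i=0,\dots,k$, such that $B$ is admissible with respect to $\mathcal E=((L_0,\gamma_0),\dots,(L_k,\gamma_k))$.
   Context: An anchor of $L$: a path $\gamma$ with $\gamma(0)=y$, $\gamma(1)\in L$. For $i\ne j$, $\ell_{ij}(t)=\gamma_i(1-2t)$ ($t\le1/2$), $\gamma_j(2t-1)$ ($t\ge1/2$). $\pi_2(\mathfrak L;\vec p)$: homotopy classes of maps $v:D^2\to M$ with boundary points $z_{0k},z_{k(k-1)},\dots,z_{10}$ in counterclockwise order such that $v(z_{j(j-1)})=p_{j(j-1)}$ and $v$ maps the counterclockwise boundary arc from $z_{(j+1)j}$ to $z_{j(j-1)}$ into $L_j$. $B$ is admissible with respect to $\mathcal E$ if there exist strips $w^-_{i(i+1)}:[0,1]^2\to M$ ($i=0,\dots,k$) with $w^-_{i(i+1)}(s,0)\in L_i$, $w^-_{i(i+1)}(s,1)\in L_{i+1}$, $w^-_{i(i+1)}(0,t)=p_{(i+1)i}$, $w^-_{i(i+1)}(1,t)=\ell_{i(i+1)}(t)$, such that $B$ is the homotopy class of the disc map obtained by identifying the point $(1,t)$, $t\in[1/2,1]$, of strip $i$ with the point $(1,1-t)$ of strip $i+1$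 and collapsing each edge $\{0\}\times[0,1]$ to a point. *)

theory Defs
  imports "HOL-Analysis.Analysis"
begin

text \<open>The chain is L 0, ..., L k (n = Suc k Lagrangians, indices mod n).
  p i stands for p_{(i+1)i} (an element of L i \<inter> L ((i+1) mod n)).
  The disc D^2 is cball (0::complex) 1; the marked boundary point z_{(i+1)i}
  is cis(-2 pi i / n), so that z_{0k}, z_{k(k-1)}, ..., z_{10} appear in
  counterclockwise order, and the counterclockwise arc from z_{(j+1)j}
  to z_{j(j-1)} is {cis(-2 pi j/n + th) | 0 \<le> th \<le> 2 pi/n}.\<close>

definition corner_pt :: "nat \<Rightarrow> nat \<Rightarrow> complex" where
  "corner_pt k i = cis (- 2 * pi * real i / real (Suc k))"

definition disc_bc :: "(nat \<Rightarrow> 'a set) \<Rightarrow> nat \<Rightarrow> (nat \<Rightarrow> 'a) \<Rightarrow> (complex \<Rightarrow> 'a) \<Rightarrow> bool" where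
  "disc_bc L k p v \<longleftrightarrow>
     (\<forall>i\<le>k. v (corner_pt k i) = p i \<and>
        (\<forall>th \<in> {0 .. 2 * pi / real (Suc k)}.
            v (cis (- 2 * pi * real i / real (Suc k) + th)) \<in> L i))"

definition pi2 :: "'a::topological_space set \<Rightarrow> (nat \<Rightarrow> 'a set) \<Rightarrow> nat \<Rightarrow> (nat \<Rightarrow> 'a)
                    \<Rightarrow> (complex \<Rightarrow> 'a) set set" where
  "pi2 M L k p = {B. \<exists>v0. continuous_on (cball 0 1) v0 \<and> v0 ` cball 0 1 \<subseteq> M \<and> disc_bc L k p v0 \<and>
        B = {v. homotopic_with_canon (disc_bc L k p) (cball 0 1) M v0 v}}"

definition anchor :: "'a::topological_space set \<Rightarrow> 'a \<Rightarrow> 'a set \<Rightarrow> (real \<Rightarrow> 'a) \<Rightarrow> bool" where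
  "anchor M y L g \<longleftrightarrow> path g \<and> path_image g \<subseteq> M \<and> pathstart g = y \<and> pathfinish g \<in> L"

definition ell :: "(real \<Rightarrow> 'a) \<Rightarrow> (real \<Rightarrow> 'a) \<Rightarrow> real \<Rightarrow> 'a" where
  "ell gi gj t = (if t \<le> 1/2 then gi (1 - 2 * t) else gj (2 * t - 1))"

definition strip_ok :: "'a::topological_space set \<Rightarrow> (nat \<Rightarrow> 'a set) \<Rightarrow> nat \<Rightarrow> (nat \<Rightarrow> 'a)
      \<Rightarrow> (nat \<Rightarrow> real \<Rightarrow> 'a) \<Rightarrow> nat \<Rightarrow> (real \<times> real \<Rightarrow> 'a) \<Rightarrow> bool" where
  "strip_ok M L k p \<gamma> i w \<longleftrightarrow>
     continuous_on ({0..1} \<times> {0..1}) w \<and> w ` ({0..1} \<times> {0..1}) \<subseteq> M \<and>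
     (\<forall>s\<in>{0..1}. w (s, 0) \<in> L i \<and> w (s, 1) \<in> L (Suc i mod Suc k)) \<and>
     (\<forall>t\<in>{0..1}. w (0, t) = p i \<and> w (1, t) = ell (\<gamma> i) (\<gamma> (Suc i mod Suc k)) t)"

text \<open>Strip i is placed on the sector of D^2 of
  angles -2 pi i/n + u pi/n, u \<in> [-1,1], radius r \<in> [0,1]; the point with polar
  data (r,u) corresponds to the point (glue_s r u, glue_t r u) of the square.
  This sends the edge {0}\<times>[0,1] to the boundary point z_{(i+1)i} (collapse),
  the edge {1}\<times>[0,1/2] to the radius towards angle -2 pi (i - 1/2)/n and
  {1}\<times>[1/2,1] to the radius towards angle -2 pi (i + 1/2)/n, realising
  the identification of (1,t), t \<in> [1/2,1], in strip i with (1,1-t) in strip i+1.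
  It is a homeomorphism from the square with the left edge collapsed onto the sector.\<close>
definition glue_s :: "real \<Rightarrow> real \<Rightarrow> real" where
  "glue_s r u = max \<bar>u\<bar> (1 - r)"

definition glue_t :: "real \<Rightarrow> real \<Rightarrow> real" where
  "glue_t r u = 1/2 - u * r / (2 * glue_s r u)"

definition glued :: "nat \<Rightarrow> (nat \<Rightarrow> real \<times> real \<Rightarrow> 'a) \<Rightarrow> (complex \<Rightarrow> 'a) \<Rightarrow> bool" where
  "glued k w g \<longleftrightarrow>
     (\<forall>i\<le>k. \<forall>r\<in>{0..1}. \<forall>u\<in>{-1..1}.
        g (complex_of_real r * cis (- 2 * pi * real i / real (Suc k) + u * pi / real (Suc k)))
          = w i (glue_s r u, glue_t r u))"

definition admissible :: "'a::topological_space set \<Rightarrow> (nat \<Rightarrow> 'a set) \<Rightarrow> nat \<Rightarrow> (nat \<Rightarrow> 'a)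
      \<Rightarrow> (nat \<Rightarrow> real \<Rightarrow> 'a) \<Rightarrow> (complex \<Rightarrow> 'a) set \<Rightarrow> bool" where
  "admissible M L k p \<gamma> B \<longleftrightarrow>
     (\<exists>w g. (\<forall>i\<le>k. strip_ok M L k p \<gamma> i (w i)) \<and> glued k w g \<and> g \<in> B)"

end

theory Submission
  imports Defs
begin

(* Pick a representative v0 of B and, using path-connectedness of M, a path
   q from v0(0) to the base point y.  Inserting q radially at the centre of the disc
   (insert_path) gives a map g homotopic to v0 relative to the boundary circle, so g
   still lies in B, satisfies the boundary conditions, and sends the centre to y.
   For such a g everything is read off from the disc: the anchor of L_i is the radius
   of g towards the midpoint of the arc of L_i, and the strip w^-_{i(i+1)} is g
   restricted to the sector between two consecutive such radii, reparametrised by the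
   square via sq_to_sector, an explicit inverse of the gluing map of Defs. *)

lemma homotopic_with_canon_intro:
  fixes h :: "real \<times> 'a::topological_space \<Rightarrow> 'b::topological_space"
  assumes "continuous_on ({0..1} \<times> X) h" "h ` ({0..1} \<times> X) \<subseteq> Y"
    and "\<And>x. h (0, x) = f x" "\<And>x. h (1, x) = g x"
    and "\<And>l. l \<in> {0..1} \<Longrightarrow> P (\<lambda>x. h (l, x))"
  shows "homotopic_with_canon P X Y f g"
  unfolding homotopic_with_def
  using assms by (intro exI[of _ h]) (auto simp: image_subset_iff_funcset)

(* The radial squeeze of the unit disc: it collapses the disc of radius 1/2 to the
   centre, stretches the annulus 1/2 \<le> |z| \<le> 1 onto the whole disc and fixes the circle. *)
definition squeeze_factor :: "real \<Rightarrow> real" where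
  "squeeze_factor r = max 0 (2 * r - 1) / max r (1/2)"

definition squeeze :: "complex \<Rightarrow> complex" where
  "squeeze z = complex_of_real (squeeze_factor (cmod z)) * z"

lemma squeeze_factor_bounds: "r \<le> 1 \<Longrightarrow> 0 \<le> squeeze_factor r \<and> squeeze_factor r \<le> 1"
  by (auto simp: squeeze_factor_def divide_simps max_def)

lemma continuous_squeeze_factor: "continuous_on A squeeze_factor"
  unfolding squeeze_factor_def by (intro continuous_intros) (auto simp: max_def)

lemma continuous_squeeze: "continuous_on A squeeze"
  unfolding squeeze_def
  by (intro continuous_intros continuous_on_compose2[OF continuous_squeeze_factor[of UNIV]]) auto

lemma norm_squeeze_le: "cmod z \<le> 1 \<Longrightarrow> cmod (squeeze z) \<le> 1"
  using squeeze_factor_bounds[of "cmod z"]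
  by (simp add: squeeze_def norm_mult mult_le_one)

lemma squeeze_boundary: "cmod z = 1 \<Longrightarrow> squeeze z = z"
  by (simp add: squeeze_def squeeze_factor_def)

lemma squeeze_inner: "cmod z \<le> 1/2 \<Longrightarrow> squeeze z = 0"
  by (simp add: squeeze_def squeeze_factor_def)

definition insert_path :: "(real \<Rightarrow> 'a) \<Rightarrow> (complex \<Rightarrow> 'a) \<Rightarrow> complex \<Rightarrow> 'a" where
  "insert_path q v z = (if cmod z \<le> 1/2 then q (1 - 2 * cmod z) else v (squeeze z))"

lemma insert_path_center: "insert_path q v 0 = q 1"
  by (simp add: insert_path_def)

(* v is homotopic to v \<circ> squeeze relative to the boundary circle (interpolate the
   radial scaling factor linearly). *)
lemma homotopic_squeeze:
  assumes "continuous_on (cball 0 1) v" "v ` cball 0 1 \<subseteq> M"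
  shows "homotopic_with_canon (\<lambda>f. \<forall>z\<in>sphere 0 1. f z = v z) (cball 0 1) M v (v \<circ> squeeze)"
proof (rule homotopic_with_canon_intro)
  define c where "c l z = (1 - l) + l * squeeze_factor (cmod z)" for l z
  have c_bounds: "0 \<le> c l z \<and> c l z \<le> 1" if "l \<in> {0..1}" "cmod z \<le> 1" for l z
    using squeeze_factor_bounds[of "cmod z"] that unfolding c_def
    by (auto simp: mult_left_le)
  have in_disc: "complex_of_real (c l z) * z \<in> cball 0 1" if "l \<in> {0..1}" "cmod z \<le> 1" for l z
    using c_bounds[OF that] that by (simp add: norm_mult mult_le_one)
  let ?h = "\<lambda>(l, z). v (complex_of_real (c l z) * z)"
  have cont_c: "continuous_on ({0..1} \<times> cball 0 1) (\<lambda>x. c (fst x) (snd x))"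
    unfolding c_def
    by (intro continuous_intros continuous_on_compose2[OF continuous_squeeze_factor[of UNIV]]) auto
  show "continuous_on ({0..1} \<times> cball 0 1) ?h"
    unfolding case_prod_unfold
  proof (rule continuous_on_compose2[OF assms(1)])
    show "continuous_on ({0..1} \<times> cball 0 1) (\<lambda>x. complex_of_real (c (fst x) (snd x)) * snd x)"
      by (intro continuous_intros cont_c)
    show "(\<lambda>x. complex_of_real (c (fst x) (snd x)) * snd x) ` ({0..1} \<times> cball 0 1) \<subseteq> cball 0 1"
      using in_disc by (auto simp: mem_Times_iff)
  qed
  show "?h ` ({0..1} \<times> cball 0 1) \<subseteq> M"
    using assms(2) in_disc by (auto simp: image_subset_iff)
  show "?h (0, z) = v z" "?h (1, z) = (v \<circ> squeeze) z" for z
    by (simp_all add: c_def squeeze_def)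
  show "\<forall>z\<in>sphere 0 1. ?h (l, z) = v z" for l
    by (simp add: c_def squeeze_factor_def)
qed

(* v \<circ> squeeze is homotopic to insert_path q v relative to the boundary circle
   (let the inserted path grow from its starting point v 0). *)
lemma homotopic_insert_path:
  assumes "continuous_on (cball 0 1) v" "v ` cball 0 1 \<subseteq> M"
    and "path q" "path_image q \<subseteq> M" "pathstart q = v 0"
  shows "homotopic_with_canon (\<lambda>f. \<forall>z\<in>sphere 0 1. f z = v z) (cball 0 1) M
           (v \<circ> squeeze) (insert_path q v)"
proof (rule homotopic_with_canon_intro)
  let ?h = "\<lambda>(l, z). if cmod z \<le> 1/2 then q (l * (1 - 2 * cmod z)) else v (squeeze z)"
  have q0: "q 0 = v 0" using assms(5) by (simp add: pathstart_def)
  have tail_in_01: "l * (1 - 2 * cmod z) \<in> {0..1}" if "l \<in> {0..1}" "cmod z \<le> 1/2" for l z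
    using that by (auto simp: mult_le_one)
  show "continuous_on ({0..1} \<times> cball 0 1) ?h"
    unfolding case_prod_unfold
  proof (rule continuous_on_cases_le)
    show "continuous_on {x \<in> {0..1} \<times> cball 0 1. cmod (snd x) \<le> 1/2}
            (\<lambda>x. q (fst x * (1 - 2 * cmod (snd x))))"
      by (rule continuous_on_compose2[OF assms(3)[unfolded path_def]])
         (auto intro!: continuous_intros tail_in_01)
    show "continuous_on {x \<in> {0..1} \<times> cball 0 1. 1/2 \<le> cmod (snd x)} (\<lambda>x. v (squeeze (snd x)))"
      by (rule continuous_on_compose2[OF assms(1) continuous_on_compose2[OF continuous_squeeze[of UNIV]]])
         (auto intro!: continuous_intros norm_squeeze_le)
    show "q (fst x * (1 - 2 * cmod (snd x))) = v (squeeze (snd x))" if "cmod (snd x) = 1/2" for x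
    proof -
      have start: "fst x * (1 - 2 * cmod (snd x)) = 0" using that by simp
      show ?thesis unfolding start using that q0 by (simp add: squeeze_inner)
    qed
  qed (intro continuous_intros)
  show "?h ` ({0..1} \<times> cball 0 1) \<subseteq> M"
  proof (rule image_subsetI)
    fix x :: "real \<times> complex" assume "x \<in> {0..1} \<times> cball 0 1"
    then obtain l z where x: "x = (l, z)" and lz: "l \<in> {0..1}" "cmod z \<le> 1" by auto
    show "?h x \<in> M"
    proof (cases "cmod z \<le> 1/2")
      case True
      then show ?thesis using x tail_in_01[of l z] lz assms(4) by (auto simp: path_image_def)
    next
      case False
      then show ?thesis using x norm_squeeze_le[of z] lz assms(2) by auto
    qed
  qed
  show "?h (0, z) = (v \<circ> squeeze) z" "?h (1, z) = insert_path q v z" for z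
    using q0 by (simp_all add: squeeze_inner insert_path_def)
  show "\<forall>z\<in>sphere 0 1. ?h (l, z) = v z" for l
    by (simp add: squeeze_boundary)
qed

lemma homotopic_insert_path_rel_boundary:
  assumes "continuous_on (cball 0 1) v" "v ` cball 0 1 \<subseteq> M"
    and "path q" "path_image q \<subseteq> M" "pathstart q = v 0"
  shows "homotopic_with_canon (\<lambda>f. \<forall>z\<in>sphere 0 1. f z = v z) (cball 0 1) M v (insert_path q v)"
  using homotopic_with_trans[OF homotopic_squeeze[OF assms(1,2)] homotopic_insert_path[OF assms]] .

lemma disc_bc_boundary_cong:
  assumes "disc_bc L k p v" "\<forall>z\<in>sphere 0 1. f z = v z"
  shows "disc_bc L k p f"
  using assms unfolding disc_bc_def corner_pt_def by simp

(* Angle of the marked boundary point z_{(i+1)i}; the arc carrying L i is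
   [corner_angle k i, corner_angle k i + 2 pi/n] with n = k + 1. *)
definition corner_angle :: "nat \<Rightarrow> nat \<Rightarrow> real" where
  "corner_angle k i = - 2 * pi * real i / real (Suc k)"

lemma corner_angle_next:
  assumes "i \<le> k"
  shows "cis (corner_angle k (Suc i mod Suc k) + x) = cis (corner_angle k i - 2 * pi / real (Suc k) + x)"
proof (cases "i < k")
  case True
  then have "Suc i mod Suc k = Suc i" by simp
  moreover have "corner_angle k (Suc i) = corner_angle k i - 2 * pi / real (Suc k)"
    unfolding corner_angle_def by (simp add: field_simps add_nonneg_eq_0_iff)
  ultimately show ?thesis by simp
next
  case False
  then have "i = k" using assms by simp
  then have "corner_angle k i - 2 * pi / real (Suc k) + x = x - 2 * pi"
    unfolding corner_angle_def by (simp add: field_simps add_nonneg_eq_0_iff)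
  moreover have "cis (x - 2 * pi) = cis x"
    using cis_mult[of "x - 2 * pi" "2 * pi"] by simp
  ultimately show ?thesis using \<open>i = k\<close> by (simp add: corner_angle_def)
qed

lemma disc_bc_arc:
  assumes "disc_bc L k p g" "i \<le> k" "th \<in> {0 .. 2 * pi / real (Suc k)}"
  shows "g (cis (corner_angle k i + th)) \<in> L i"
  using assms unfolding disc_bc_def corner_angle_def by blast

lemma disc_bc_corner:
  assumes "disc_bc L k p g" "i \<le> k"
  shows "g (cis (corner_angle k i)) = p i"
  using assms unfolding disc_bc_def corner_pt_def corner_angle_def by blast

(* Inverse of the gluing map of Defs: a point (s,t) of the square goes to polar radius
   sq_radius s t and angle \<theta> + u \<alpha> with u = (1 - 2t) s / sq_radius s t, i.e. into
   the sector of half-width \<alpha> around the direction \<theta>. *)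
definition sq_radius :: "real \<Rightarrow> real \<Rightarrow> real" where
  "sq_radius s t = max (1 - s) \<bar>1 - 2 * t\<bar>"

definition sq_to_sector :: "real \<Rightarrow> real \<Rightarrow> real \<Rightarrow> real \<Rightarrow> complex" where
  "sq_to_sector \<theta> \<alpha> s t =
     complex_of_real (sq_radius s t) * cis (\<theta> + (1 - 2 * t) * s / sq_radius s t * \<alpha>)"

lemma sq_radius_nonneg: "0 \<le> sq_radius s t"
  by (simp add: sq_radius_def)

lemma sq_radius_le_1: "s \<in> {0..1} \<Longrightarrow> t \<in> {0..1} \<Longrightarrow> sq_radius s t \<le> 1"
  by (auto simp: sq_radius_def)

lemma norm_sq_to_sector: "cmod (sq_to_sector \<theta> \<alpha> s t) = sq_radius s t"
  by (simp add: sq_to_sector_def norm_mult sq_radius_nonneg)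

(* The formula divides by the radius, but the map is continuous everywhere since
   its modulus is the (continuous) radius, which vanishes where the angle is undefined. *)
lemma continuous_sq_to_sector: "continuous_on A (\<lambda>st. sq_to_sector \<theta> \<alpha> (fst st) (snd st))"
proof (rule continuous_at_imp_continuous_on, rule ballI)
  fix x :: "real \<times> real"
  have cont_radius: "isCont (\<lambda>st. sq_radius (fst st) (snd st)) x"
    unfolding sq_radius_def by (intro continuous_intros)
  show "isCont (\<lambda>st. sq_to_sector \<theta> \<alpha> (fst st) (snd st)) x"
  proof (cases "sq_radius (fst x) (snd x) = 0")
    case False
    then show ?thesis
      unfolding sq_to_sector_def cis_conv_exp by (intro continuous_intros cont_radius)
  next
    case True
    have "((\<lambda>st. sq_radius (fst st) (snd st)) \<longlongrightarrow> 0) (at x)"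
      using cont_radius True by (simp add: isCont_def)
    then have "((\<lambda>st. sq_to_sector \<theta> \<alpha> (fst st) (snd st)) \<longlongrightarrow> 0) (at x)"
      by (subst tendsto_norm_zero_iff[symmetric]) (simp add: norm_sq_to_sector)
    moreover have "sq_to_sector \<theta> \<alpha> (fst x) (snd x) = 0"
      using True by (simp add: sq_to_sector_def)
    ultimately show ?thesis by (simp add: isCont_def)
  qed
qed

lemma glue_t_times_s:
  assumes "0 \<le> r"
  shows "(1 - 2 * glue_t r u) * glue_s r u = u * r"
proof (cases "glue_s r u = 0")
  case True
  then have "u = 0" unfolding glue_s_def by (simp add: max_def split: if_splits)
  then show ?thesis by (simp add: glue_t_def)
next
  case False
  then show ?thesis unfolding glue_t_def by (simp add: field_simps)
qed

lemma sq_radius_glue: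
  assumes "\<bar>u\<bar> \<le> 1" "0 \<le> r" "r \<le> 1"
  shows "sq_radius (glue_s r u) (glue_t r u) = r"
proof (cases "glue_s r u = 0")
  case True
  then have "u = 0" "r = 1" using assms unfolding glue_s_def by (auto simp: max_def split: if_splits)
  then show ?thesis by (simp add: sq_radius_def glue_s_def glue_t_def)
next
  case False
  have "glue_s r u \<ge> 0" by (simp add: glue_s_def)
  then have s_pos: "glue_s r u > 0" using False by linarith
  have "\<bar>1 - 2 * glue_t r u\<bar> * glue_s r u = \<bar>u\<bar> * r"
    using glue_t_times_s[OF assms(2), of u] s_pos assms(2) by (metis abs_mult abs_of_nonneg less_imp_le)
  then have t_part: "\<bar>1 - 2 * glue_t r u\<bar> = \<bar>u\<bar> * r / glue_s r u"
    using s_pos by (simp add: field_simps)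
  show ?thesis
  proof (cases "1 - r \<le> \<bar>u\<bar>")
    case True
    then have "glue_s r u = \<bar>u\<bar>" by (simp add: glue_s_def)
    then show ?thesis using True s_pos t_part by (simp add: sq_radius_def)
  next
    case False
    then have s_eq: "glue_s r u = 1 - r" by (simp add: glue_s_def)
    have "\<bar>u\<bar> * r \<le> (1 - r) * r" using False assms by (intro mult_right_mono) auto
    moreover have "\<bar>1 - 2 * glue_t r u\<bar> = \<bar>u\<bar> * r / (1 - r)" using t_part s_eq by simp
    ultimately have "\<bar>1 - 2 * glue_t r u\<bar> \<le> r"
      using s_pos s_eq by (simp add: pos_divide_le_eq mult.commute)
    then show ?thesis using s_eq by (simp add: sq_radius_def)
  qed
qed

lemma sq_to_sector_glue:
  assumes "\<bar>u\<bar> \<le> 1" "0 \<le> r" "r \<le> 1"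
  shows "sq_to_sector \<theta> \<alpha> (glue_s r u) (glue_t r u) = complex_of_real r * cis (\<theta> + u * \<alpha>)"
proof (cases "r = 0")
  case True
  then show ?thesis unfolding sq_to_sector_def sq_radius_glue[OF assms] by simp
next
  case False
  have "(1 - 2 * glue_t r u) * glue_s r u / sq_radius (glue_s r u) (glue_t r u) = u"
    unfolding sq_radius_glue[OF assms] glue_t_times_s[OF assms(2)] using False by simp
  then show ?thesis unfolding sq_to_sector_def sq_radius_glue[OF assms] by (simp add: mult.assoc)
qed

lemma sq_to_sector_bottom: "s \<in> {0..1} \<Longrightarrow> sq_to_sector \<theta> \<alpha> s 0 = cis (\<theta> + s * \<alpha>)"
  by (simp add: sq_to_sector_def sq_radius_def)

lemma sq_to_sector_top: "s \<in> {0..1} \<Longrightarrow> sq_to_sector \<theta> \<alpha> s 1 = cis (\<theta> - s * \<alpha>)"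
  by (simp add: sq_to_sector_def sq_radius_def)

lemma sq_to_sector_left: "t \<in> {0..1} \<Longrightarrow> sq_to_sector \<theta> \<alpha> 0 t = cis \<theta>"
  by (auto simp: sq_to_sector_def sq_radius_def max_def)

lemma sq_to_sector_right_lower:
  assumes "t \<le> 1/2"
  shows "sq_to_sector \<theta> \<alpha> 1 t = complex_of_real (1 - 2 * t) * cis (\<theta> + \<alpha>)"
proof (cases "t = 1/2")
  case False
  then have "(1 - 2 * t) / (1 - 2 * t) = 1" by simp
  then show ?thesis using assms by (simp add: sq_to_sector_def sq_radius_def)
next
  case True
  show ?thesis unfolding True by (simp add: sq_to_sector_def sq_radius_def)
qed

lemma sq_to_sector_right_upper:
  assumes "t > 1/2"
  shows "sq_to_sector \<theta> \<alpha> 1 t = complex_of_real (2 * t - 1) * cis (\<theta> - \<alpha>)"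
proof -
  have "(1 - 2 * t) / (2 * t - 1) = -1" using assms by (simp add: divide_simps)
  then show ?thesis using assms by (simp add: sq_to_sector_def sq_radius_def)
qed

definition radial_anchor :: "nat \<Rightarrow> (complex \<Rightarrow> 'a) \<Rightarrow> nat \<Rightarrow> real \<Rightarrow> 'a" where
  "radial_anchor k g i \<tau> = g (complex_of_real \<tau> * cis (corner_angle k i + pi / real (Suc k)))"

definition sector_strip :: "nat \<Rightarrow> (complex \<Rightarrow> 'a) \<Rightarrow> nat \<Rightarrow> real \<times> real \<Rightarrow> 'a" where
  "sector_strip k g i st = g (sq_to_sector (corner_angle k i) (pi / real (Suc k)) (fst st) (snd st))"

lemma anchor_radial_anchor:
  assumes "continuous_on (cball 0 1) g" "g ` cball 0 1 \<subseteq> M" "g 0 = y"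
    and "disc_bc L k p g" "i \<le> k"
  shows "anchor M y (L i) (radial_anchor k g i)"
proof -
  have "path (radial_anchor k g i)"
    unfolding path_def radial_anchor_def
    by (rule continuous_on_compose2[OF assms(1)]) (auto intro!: continuous_intros simp: norm_mult)
  moreover have "path_image (radial_anchor k g i) \<subseteq> M"
    using assms(2) by (auto simp: path_image_def radial_anchor_def norm_mult)
  moreover have "pi / real (Suc k) \<in> {0 .. 2 * pi / real (Suc k)}"
    by (simp add: divide_right_mono)
  ultimately show ?thesis
    using assms(3) disc_bc_arc[OF assms(4,5)]
    by (simp add: anchor_def pathstart_def pathfinish_def radial_anchor_def)
qed

lemma sector_strip_long_sides:
  assumes "disc_bc L k p g" "i \<le> k" "s \<in> {0..1}"
  shows "sector_strip k g i (s, 0) \<in> L i" and "sector_strip k g i (s, 1) \<in> L (Suc i mod Suc k)"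
proof -
  let ?n = "real (Suc k)" and ?j = "Suc i mod Suc k"
  have j_le: "?j \<le> k" by (simp add: less_Suc_eq_le)
  have "s * pi / ?n \<in> {0 .. 2 * pi / ?n}" and "(2 - s) * pi / ?n \<in> {0 .. 2 * pi / ?n}"
    using assms(3) by (auto simp: divide_simps)
  moreover have "cis (corner_angle k i - s * (pi / ?n)) = cis (corner_angle k ?j + (2 - s) * pi / ?n)"
    unfolding corner_angle_next[OF assms(2)] by (simp add: left_diff_distrib diff_divide_distrib)
  ultimately show "sector_strip k g i (s, 0) \<in> L i" "sector_strip k g i (s, 1) \<in> L ?j"
    using disc_bc_arc[OF assms(1,2)] disc_bc_arc[OF assms(1) j_le] assms(3)
    by (simp_all add: sector_strip_def sq_to_sector_bottom sq_to_sector_top)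
qed

lemma sector_strip_short_sides:
  assumes "disc_bc L k p g" "i \<le> k" "t \<in> {0..1}"
  shows "sector_strip k g i (0, t) = p i"
    and "sector_strip k g i (1, t) = ell (radial_anchor k g i) (radial_anchor k g (Suc i mod Suc k)) t"
proof -
  show "sector_strip k g i (0, t) = p i"
    using disc_bc_corner[OF assms(1,2)] assms(3) by (simp add: sector_strip_def sq_to_sector_left)
  have "cis (corner_angle k (Suc i mod Suc k) + pi / real (Suc k)) = cis (corner_angle k i - pi / real (Suc k))"
    unfolding corner_angle_next[OF assms(2)] by (simp add: diff_divide_distrib)
  then show "sector_strip k g i (1, t) = ell (radial_anchor k g i) (radial_anchor k g (Suc i mod Suc k)) t"
    by (simp add: sector_strip_def ell_def radial_anchor_def sq_to_sector_right_lower sq_to_sector_right_upper)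
qed

lemma strip_ok_sector_strip:
  assumes "continuous_on (cball 0 1) g" "g ` cball 0 1 \<subseteq> M" "disc_bc L k p g" "i \<le> k"
  shows "strip_ok M L k p (radial_anchor k g) i (sector_strip k g i)"
proof -
  have in_disc: "sq_to_sector \<theta> \<alpha> (fst st) (snd st) \<in> cball 0 1" if "st \<in> {0..1} \<times> {0..1}" for \<theta> \<alpha> st
    using that by (auto simp: norm_sq_to_sector sq_radius_le_1 mem_Times_iff)
  have "continuous_on ({0..1} \<times> {0..1}) (sector_strip k g i)"
    unfolding sector_strip_def[abs_def]
    by (rule continuous_on_compose2[OF assms(1) continuous_sq_to_sector]) (auto intro: in_disc)
  moreover have "sector_strip k g i ` ({0..1} \<times> {0..1}) \<subseteq> M"
    using assms(2) in_disc by (auto simp: sector_strip_def)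
  ultimately show ?thesis
    unfolding strip_ok_def
    using sector_strip_long_sides[OF assms(3,4)] sector_strip_short_sides[OF assms(3,4)] by blast
qed

lemma glued_sector_strip: "glued k (sector_strip k g) g"
  unfolding glued_def sector_strip_def
  by (auto simp: sq_to_sector_glue corner_angle_def)

lemma admissible_from_disc_map:
  assumes "continuous_on (cball 0 1) g" "g ` cball 0 1 \<subseteq> M" "g 0 = y"
    and "disc_bc L k p g" "g \<in> B"
  shows "(\<forall>i\<le>k. anchor M y (L i) (radial_anchor k g i)) \<and> admissible M L k p (radial_anchor k g) B"
  using anchor_radial_anchor[OF assms(1-4)] strip_ok_sector_strip[OF assms(1,2,4)]
    glued_sector_strip assms(5)
  unfolding admissible_def by blast

theorem mainTheorem8:
  fixes M :: "'a::topological_space set" and L :: "nat \<Rightarrow> 'a set" and y :: 'a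
    and k :: nat and p :: "nat \<Rightarrow> 'a" and B :: "(complex \<Rightarrow> 'a) set"
  assumes "path_connected M" and "y \<in> M"
    and "\<forall>i\<le>k. L i \<subseteq> M"
    and "\<forall>i\<le>k. p i \<in> L i \<inter> L (Suc i mod Suc k)"
    and "B \<in> pi2 M L k p"
  shows "\<exists>\<gamma>. (\<forall>i\<le>k. anchor M y (L i) (\<gamma> i)) \<and> admissible M L k p \<gamma> B"
proof -
  obtain v0 where v0_cont: "continuous_on (cball 0 1) v0" and v0_M: "v0 ` cball 0 1 \<subseteq> M"
    and v0_bc: "disc_bc L k p v0"
    and B_eq: "B = {v. homotopic_with_canon (disc_bc L k p) (cball 0 1) M v0 v}"
    using assms(5) unfolding pi2_def by blast
  have "v0 0 \<in> M" using v0_M by auto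
  then obtain q where q: "path q" "path_image q \<subseteq> M" "pathstart q = v0 0" "pathfinish q = y"
    using assms(1,2) unfolding path_connected_def by blast
  define g where "g = insert_path q v0"
  have hom: "homotopic_with_canon (\<lambda>f. \<forall>z\<in>sphere 0 1. f z = v0 z) (cball 0 1) M v0 g"
    unfolding g_def by (rule homotopic_insert_path_rel_boundary[OF v0_cont v0_M q(1-3)])
  have g_cont: "continuous_on (cball 0 1) g" and g_M: "g ` cball 0 1 \<subseteq> M"
    using homotopic_with_imp_continuous[OF hom] homotopic_with_imp_subset2[OF hom] by auto
  have g_bc: "disc_bc L k p g"
    using disc_bc_boundary_cong[OF v0_bc] homotopic_with_imp_property[OF hom] by blast
  have g_center: "g 0 = y"
    using q(4) by (simp add: g_def insert_path_center pathfinish_def)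
  have "g \<in> B"
    unfolding B_eq using homotopic_with_mono[OF hom] disc_bc_boundary_cong[OF v0_bc] by blast
  then show ?thesis
    using admissible_from_disc_map[OF g_cont g_M g_center g_bc] by blast
qed

end
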